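(* With $T=\mathcal{P}_{\mathsf{ufs}}$, $FX=1+\mathbb{A}\times X+[\mathbb{A}]X$ and $GX=2\times X^{\mathbb{A}}\times[\mathbb{A}]X$, the natural transformation $\varepsilon\colon TF\to GT$ given by $\varepsilon_X(S)=(b,\,a\mapsto S_a,\,S_{\mathord{|}a})$, where $b=1$ iff $*\in S$, $S_a=\{s:(a,s)\in S\}$ and $S_{\mathord{|}a}=\langle a\rangle\{s:\langle a\rangle s\in S\}$ for $a$ fresh for $S$, is an extension natural transformation, i.e. it satisfies $\varepsilon\cdot\mu F\cdot T\lambda=G\mu\cdot\varepsilon T$ and $\varepsilon\cdot\mu F=G\mu\cdot\rho T\cdot T\varepsilon$.
   Context: Fix a countably infinite set $\mathbb{A}$ of names; $\mathsf{Nom}$ is the category of nominal sets and equivariant maps; $1=\{*\}$, $2=\{0,1\}$. $[\mathbb{A}]X=(\mathbb{A}\times X)/\sim$, $(a,x)\sim(b,y)$ iff $(a\,c)\cdot x=(b\,c)\cdot y$ for fresh $c$, classes $\langle a\rangle x$. $T=\mathcal{P}_{\mathsf{ufs}}$ is the monad of uniformly finitely supported subsets (subsets $A$ with $\bigcup_{x\in A}\mathrm{supp}(x)$ finite), with unit $\eta$ singleton and multiplication $\mu$ union. $\lambda\colon FT\to TF$ is the distributive law $\lambda_X( * )=\{*\}$, $\lambda_X(a,S)=\{(a,x):x\in S\}$, $\lambda_X(\langle a\rangle S)=\{\langle a\rangle s:s\in S\}$. $\rho\colon TG\to GT$ is the distributive law of the canonical lifting of $G$: with product projections $p_0,p_1,p_2$,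 $\rho_X(S)=(b,\,a\mapsto\{f(a):f\in p_1[S]\},\,\langle a\rangle\{s:\langle a\rangle s\in p_2[S]\})$ where $b=1$ iff $1\in p_0[S]$ and $a$ is fresh for $p_2[S]$. *)

theory Defs
  imports Main
begin

text \<open>Names: the countably infinite set of atoms is represented by nat.
 Finite permutations are bijections nat to nat moving only finitely many names.\<close>

type_synonym name = nat

definition fperm :: "(name \<Rightarrow> name) \<Rightarrow> bool" where
  "fperm p \<longleftrightarrow> bij p \<and> finite {a. p a \<noteq> a}"

definition swp :: "name \<Rightarrow> name \<Rightarrow> name \<Rightarrow> name" where
  "swp a b c = (if c = a then b else if c = b then a else c)"

definition supports :: "((name \<Rightarrow> name) \<Rightarrow> 'x \<Rightarrow> 'x) \<Rightarrow> name set \<Rightarrow> 'x \<Rightarrow> bool" where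
  "supports act A x \<longleftrightarrow> (\<forall>p. fperm p \<and> (\<forall>a\<in>A. p a = a) \<longrightarrow> act p x = x)"

definition supp :: "((name \<Rightarrow> name) \<Rightarrow> 'x \<Rightarrow> 'x) \<Rightarrow> 'x \<Rightarrow> name set" where
  "supp act x = \<Inter>{A. finite A \<and> supports act A x}"

definition nominal_set :: "'x set \<Rightarrow> ((name \<Rightarrow> name) \<Rightarrow> 'x \<Rightarrow> 'x) \<Rightarrow> bool" where
  "nominal_set X act \<longleftrightarrow>
     (\<forall>x. act id x = x) \<and>
     (\<forall>p q x. fperm p \<longrightarrow> fperm q \<longrightarrow> act (p \<circ> q) x = act p (act q x)) \<and>
     (\<forall>p x. fperm p \<longrightarrow> x \<in> X \<longrightarrow> act p x \<in> X) \<and>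
     (\<forall>x\<in>X. \<exists>A. finite A \<and> supports act A x)"

text \<open>The class <a>x of (a,x) under (a,x) ~ (b,y) iff (a c).x = (b c).y for fresh c.\<close>
definition abs :: "((name \<Rightarrow> name) \<Rightarrow> 'x \<Rightarrow> 'x) \<Rightarrow> name \<Rightarrow> 'x \<Rightarrow> (name \<times> 'x) set" where
  "abs act a x = {(b, y). \<exists>c. c \<noteq> a \<and> c \<noteq> b \<and> c \<notin> supp act x \<and> c \<notin> supp act y
                       \<and> act (swp a c) x = act (swp b c) y}"

definition absact :: "((name \<Rightarrow> name) \<Rightarrow> 'x \<Rightarrow> 'x) \<Rightarrow> (name \<Rightarrow> name) \<Rightarrow> (name \<times> 'x) set \<Rightarrow> (name \<times> 'x) set" where
  "absact act p \<alpha> = (\<lambda>(b, y). (p b, act p y)) ` \<alpha>"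

text \<open>Functorial action [A]f on abstractions: [A]f(<a>x) = <a>(f x) (act' = action of target).\<close>
definition absmap :: "((name \<Rightarrow> name) \<Rightarrow> 'y \<Rightarrow> 'y) \<Rightarrow> ('x \<Rightarrow> 'y) \<Rightarrow> (name \<times> 'x) set \<Rightarrow> (name \<times> 'y) set" where
  "absmap act' f \<alpha> = (let z = (SOME z. z \<in> \<alpha>) in abs act' (fst z) (f (snd z)))"

definition Tact :: "((name \<Rightarrow> name) \<Rightarrow> 'x \<Rightarrow> 'x) \<Rightarrow> (name \<Rightarrow> name) \<Rightarrow> 'x set \<Rightarrow> 'x set" where
  "Tact act p S = act p ` S"

definition Tc :: "'x set \<Rightarrow> ((name \<Rightarrow> name) \<Rightarrow> 'x \<Rightarrow> 'x) \<Rightarrow> 'x set set" where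
  "Tc X act = {S. S \<subseteq> X \<and> finite (\<Union>x\<in>S. supp act x)}"

datatype 'x F = FStar | FPair name 'x | FAbs "(name \<times> 'x) set"

definition Fact :: "((name \<Rightarrow> name) \<Rightarrow> 'x \<Rightarrow> 'x) \<Rightarrow> (name \<Rightarrow> name) \<Rightarrow> 'x F \<Rightarrow> 'x F" where
  "Fact act p t = (case t of FStar \<Rightarrow> FStar
                           | FPair a x \<Rightarrow> FPair (p a) (act p x)
                           | FAbs \<alpha> \<Rightarrow> FAbs (absact act p \<alpha>))"

definition Fc :: "'x set \<Rightarrow> ((name \<Rightarrow> name) \<Rightarrow> 'x \<Rightarrow> 'x) \<Rightarrow> 'x F set" where
  "Fc X act = {FStar} \<union> {FPair a x | a x. x \<in> X} \<union> {FAbs (abs act a x) | a x. x \<in> X}"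

type_synonym 'x G = "bool \<times> (name \<Rightarrow> 'x) \<times> (name \<times> 'x) set"

definition Gmap :: "('x \<Rightarrow> 'y) \<Rightarrow> ((name \<Rightarrow> name) \<Rightarrow> 'y \<Rightarrow> 'y) \<Rightarrow> 'x G \<Rightarrow> 'y G" where
  "Gmap f act' g = (case g of (b, h, \<alpha>) \<Rightarrow> (b, f \<circ> h, absmap act' f \<alpha>))"

definition lam :: "((name \<Rightarrow> name) \<Rightarrow> 'x \<Rightarrow> 'x) \<Rightarrow> 'x set F \<Rightarrow> 'x F set" where
  "lam act t = (case t of FStar \<Rightarrow> {FStar}
                        | FPair a S \<Rightarrow> {FPair a x | x. x \<in> S}
                        | FAbs \<alpha> \<Rightarrow> (let z = (SOME z. z \<in> \<alpha>)
                                     in {FAbs (abs act (fst z) s) | s. s \<in> snd z}))"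

definition rho :: "((name \<Rightarrow> name) \<Rightarrow> 'x \<Rightarrow> 'x) \<Rightarrow> 'x G set \<Rightarrow> 'x set G" where
  "rho act S =
     (let P2 = (\<lambda>g. snd (snd g)) ` S;
          a = (SOME a. a \<notin> supp (Tact (absact act)) P2)
      in (True \<in> fst ` S,
          \<lambda>a. {f a | f. f \<in> (\<lambda>g. fst (snd g)) ` S},
          abs (Tact act) a {s. abs act a s \<in> P2}))"

definition eps :: "((name \<Rightarrow> name) \<Rightarrow> 'x \<Rightarrow> 'x) \<Rightarrow> 'x F set \<Rightarrow> 'x set G" where
  "eps act S =
     (let a = (SOME a. a \<notin> supp (Tact (Fact act)) S)
      in (FStar \<in> S,
          \<lambda>a. {s. FPair a s \<in> S},
          abs (Tact act) a {s. FAbs (abs act a s) \<in> S}))"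

end

(* Both laws are checked componentwise; the boolean and the name-indexed components are
   plain set manipulations.  The work is in the abstraction components: \<epsilon> and \<rho> are
   defined through a chosen fresh name, \<lambda> and [\<A>]f through a chosen representative, and
   none of them depends on the choice.  All the data are uniformly supported, hence
   supported by the finite set N of names occurring in the argument S, so a single name
   a \<notin> N can be used everywhere.  At such an a, abstraction <a>(-) is injective and
   commutes with unions, and both sides of either law become <a>{s. <a>s \<in> Z} for the
   same Z. *)

theory Submission
  imports Defs
begin

section \<open>Finite permutations and their actions\<close>

lemma fperm_id [simp]: "fperm id"
  by (simp add: fperm_def)

lemma fperm_comp [simp]:
  assumes "fperm p" and "fperm q"
  shows "fperm (p \<circ> q)"
proof -
  have "{a. (p \<circ> q) a \<noteq> a} \<subseteq> {a. p a \<noteq> a} \<union> {a. q a \<noteq> a}" by auto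
  then show ?thesis
    using assms unfolding fperm_def by (auto intro: bij_comp elim: finite_subset)
qed

lemma fperm_inv [simp]:
  assumes "fperm p"
  shows "fperm (inv p)"
proof -
  have b: "bij p" and fin: "finite {a. p a \<noteq> a}" using assms by (auto simp: fperm_def)
  have "inv p a = a \<longleftrightarrow> p a = a" for a
    using bij_inv_eq_iff[OF b, of a a] by auto
  then have "{a. inv p a \<noteq> a} = {a. p a \<noteq> a}" by simp
  then show ?thesis using b fin by (simp add: fperm_def bij_imp_bij_inv)
qed

lemma fperm_inj: "fperm p \<Longrightarrow> inj p"
  by (simp add: fperm_def bij_is_inj)

lemma swp_swp [simp]: "swp a b (swp a b x) = x"
  by (simp add: swp_def)

lemma swp_comp_swp [simp]: "swp a b \<circ> swp a b = id"
  by (auto simp: swp_def)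

lemma swp_same [simp]: "swp a a = id"
  by (auto simp: swp_def)

lemma fperm_swp [simp]: "fperm (swp a b)"
proof -
  have "bij (swp a b)" by (rule o_bij[of "swp a b"]) simp_all
  moreover have "{c. swp a b c \<noteq> c} \<subseteq> {a, b}" by (auto simp: swp_def)
  ultimately show ?thesis unfolding fperm_def by (auto elim: finite_subset)
qed

lemma comp_swp: "inj p \<Longrightarrow> p \<circ> swp a c = swp (p a) (p c) \<circ> p"
  by (rule ext) (auto simp: swp_def dest: injD)

lemma exists_fresh_name: "finite (A :: name set) \<Longrightarrow> \<exists>c. c \<notin> A"
  using ex_new_if_finite[OF infinite_UNIV_nat] by blast

(* The action axioms of nominal_set without a carrier: the actions induced on T X, F X and
   [\<A>]X are considered on the whole ambient types. *)
definition perm_action :: "((name \<Rightarrow> name) \<Rightarrow> 'x \<Rightarrow> 'x) \<Rightarrow> bool" where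
  "perm_action act \<longleftrightarrow> (\<forall>x. act id x = x) \<and>
     (\<forall>p q x. fperm p \<longrightarrow> fperm q \<longrightarrow> act (p \<circ> q) x = act p (act q x))"

definition eqvt :: "((name \<Rightarrow> name) \<Rightarrow> 'x \<Rightarrow> 'x) \<Rightarrow> ((name \<Rightarrow> name) \<Rightarrow> 'y \<Rightarrow> 'y) \<Rightarrow> ('x \<Rightarrow> 'y) \<Rightarrow> bool"
  where "eqvt act act' f \<longleftrightarrow> (\<forall>p x. fperm p \<longrightarrow> f (act p x) = act' p (f x))"

lemma nominal_set_perm_action: "nominal_set X act \<Longrightarrow> perm_action act"
  by (simp add: nominal_set_def perm_action_def)

lemma perm_action_id [simp]: "perm_action act \<Longrightarrow> act id x = x"
  by (simp add: perm_action_def)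

lemma perm_action_comp:
  "perm_action act \<Longrightarrow> fperm p \<Longrightarrow> fperm q \<Longrightarrow> act (p \<circ> q) x = act p (act q x)"
  by (simp add: perm_action_def)

lemma perm_action_inv_left [simp]:
  assumes "perm_action act" and "fperm p"
  shows "act (inv p) (act p x) = x"
proof -
  have "inv p \<circ> p = id" using assms(2) by (simp add: fperm_inj)
  then show ?thesis using assms perm_action_comp[of act "inv p" p x] by simp
qed

lemma perm_action_inv_right [simp]:
  assumes "perm_action act" and "fperm p"
  shows "act p (act (inv p) x) = x"
proof -
  have "p \<circ> inv p = id" using assms(2) by (simp add: fperm_def bij_is_surj surj_iff[symmetric])
  then show ?thesis using assms perm_action_comp[of act p "inv p" x] by simp
qed

lemma perm_action_inject: "perm_action act \<Longrightarrow> fperm p \<Longrightarrow> act p x = act p y \<longleftrightarrow> x = y"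
  by (metis perm_action_inv_left)

lemma perm_action_swp_swp [simp]: "perm_action act \<Longrightarrow> act (swp a b) (act (swp a b) x) = x"
  using perm_action_comp[of act "swp a b" "swp a b" x] by simp

lemma perm_action_Tact [simp]: "perm_action act \<Longrightarrow> perm_action (Tact act)"
  unfolding perm_action_def Tact_def by (auto simp: image_comp)

lemma perm_action_absact [simp]: "perm_action act \<Longrightarrow> perm_action (absact act)"
  unfolding perm_action_def absact_def by (auto simp: image_comp case_prod_beta' o_def)

lemma perm_action_Fact [simp]:
  assumes "perm_action act"
  shows "perm_action (Fact act)"
proof -
  have "perm_action (absact act)" using assms by simp
  then show ?thesis
    using assms unfolding perm_action_def Fact_def by (auto split: F.split)
qed

lemma eqvt_FAbs: "eqvt (absact act) (Fact act) FAbs"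
  by (simp add: eqvt_def Fact_def)

lemma eqvt_Union: "eqvt (Tact (Tact act)) (Tact act) Union"
  by (simp add: eqvt_def Tact_def image_Union)

section \<open>Support\<close>

lemma supp_subset: "finite A \<Longrightarrow> supports act A x \<Longrightarrow> supp act x \<subseteq> A"
  unfolding supp_def by blast

lemma finite_supp: "finite A \<Longrightarrow> supports act A x \<Longrightarrow> finite (supp act x)"
  by (rule finite_subset[OF supp_subset])

lemma infinite_supp_UNIV:
  assumes "infinite (supp act x)"
  shows "supp act x = UNIV"
proof -
  have "{A. finite A \<and> supports act A x} = {}"
    using assms finite_supp[of _ act x] by blast
  then show ?thesis unfolding supp_def by (simp only: Inter_empty)
qed

lemma swp_fresh:
  assumes pa: "perm_action act" and a: "a \<notin> supp act x" and b: "b \<notin> supp act x"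
  shows "act (swp a b) x = x"
proof -
  obtain A where A: "finite A" "supports act A x" "a \<notin> A" using a unfolding supp_def by blast
  obtain B where B: "finite B" "supports act B x" "b \<notin> B" using b unfolding supp_def by blast
  obtain c where c: "c \<notin> A \<union> B \<union> {a, b}"
    using exists_fresh_name[of "A \<union> B \<union> {a, b}"] A B by blast
  have "fperm (swp a c) \<and> (\<forall>d\<in>A. swp a c d = d)" "fperm (swp b c) \<and> (\<forall>d\<in>B. swp b c d = d)"
    using A(3) B(3) c by (auto simp: swp_def)
  then have ac: "act (swp a c) x = x" and bc: "act (swp b c) x = x"
    using A(2) B(2) unfolding supports_def by blast+
  show ?thesis
  proof (cases "a = b")
    case True then show ?thesis using pa by simp
  next
    case False
    \<comment> \<open>the transposition (a b) is the conjugate (a c)(b c)(a c)\<close>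
    have "swp a b = swp a c \<circ> (swp b c \<circ> swp a c)"
      using c False by (intro ext) (auto simp: swp_def)
    then show ?thesis using ac bc by (simp add: perm_action_comp[OF pa])
  qed
qed

lemma perm_fixing_supp:
  assumes pa: "perm_action act" and "fperm p" and "\<And>a. a \<in> supp act x \<Longrightarrow> p a = a"
  shows "act p x = x"
  using assms(2,3)
proof (induction "card {a. p a \<noteq> a}" arbitrary: p rule: less_induct)
  case less
  show ?case
  proof (cases "p = id")
    case True
    then show ?thesis using pa by simp
  next
    case False
    then obtain a where a: "p a \<noteq> a" by (metis eq_id_iff)
    have fin: "finite {d. p d \<noteq> d}" using less.prems(1) by (simp add: fperm_def)
    have inj: "inj p" using less.prems(1) by (rule fperm_inj)
    define q where "q = swp a (p a) \<circ> p"
    have pa_moved: "p (p a) \<noteq> p a" using a inj_eq[OF inj, of "p a" a] by simp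
    have q_fixed: "q d = d" if "p d = d" for d
    proof -
      have "d \<noteq> a" "d \<noteq> p a" using that a pa_moved by auto
      then show ?thesis using that by (simp add: q_def swp_def)
    qed
    have "q a = a" by (simp add: q_def swp_def)
    then have "{d. q d \<noteq> d} \<subseteq> {d. p d \<noteq> d} - {a}" using q_fixed by blast
    then have "card {d. q d \<noteq> d} \<le> card ({d. p d \<noteq> d} - {a})"
      using fin by (intro card_mono) auto
    also have "\<dots> < card {d. p d \<noteq> d}" using fin a by (intro card_Diff1_less) auto
    finally have "card {d. q d \<noteq> d} < card {d. p d \<noteq> d}" .
    moreover have "fperm q" using less.prems(1) by (simp add: q_def)
    moreover have "q e = e" if "e \<in> supp act x" for e
      using less.prems(2)[OF that] by (rule q_fixed)
    ultimately have q_fix: "act q x = x" by (rule less.hyps)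
    have "a \<notin> supp act x" "p a \<notin> supp act x"
      using less.prems(2) a pa_moved by auto
    then have swp_fix: "act (swp a (p a)) x = x" by (rule swp_fresh[OF pa])
    have "p = swp a (p a) \<circ> q" by (simp add: q_def o_assoc)
    then show ?thesis
      using q_fix swp_fix perm_action_comp[OF pa fperm_swp \<open>fperm q\<close>] by metis
  qed
qed

lemma supports_supp: "perm_action act \<Longrightarrow> supports act (supp act x) x"
  unfolding supports_def by (auto intro: perm_fixing_supp)

lemma perm_action_cong:
  assumes pa: "perm_action act" and p: "fperm p" and q: "fperm q"
    and agree: "\<And>a. a \<in> supp act x \<Longrightarrow> p a = q a"
  shows "act p x = act q x"
proof -
  have "act (inv q \<circ> p) x = x"
    using p q agree by (intro perm_fixing_supp[OF pa]) (simp_all add: fperm_inj)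
  then have "act q (act (inv q \<circ> p) x) = act q x" by simp
  then show ?thesis using pa p q by (simp add: perm_action_comp)
qed

lemma supports_perm:
  assumes pa: "perm_action act" and p: "fperm p" and s: "supports act A x"
  shows "supports act (p ` A) (act p x)"
  unfolding supports_def
proof (intro allI impI)
  fix r assume r: "fperm r \<and> (\<forall>a\<in>p ` A. r a = a)"
  have bp: "bij p" using p by (simp add: fperm_def)
  have "\<forall>a\<in>A. (inv p \<circ> r \<circ> p) a = a" using r bp by (simp add: bij_is_inj)
  then have "act (inv p \<circ> r \<circ> p) x = x"
    using s r p unfolding supports_def by simp
  moreover have "p \<circ> (inv p \<circ> r \<circ> p) = r \<circ> p"
    using bp by (auto simp: bij_is_surj surj_f_inv_f)
  ultimately show "act r (act p x) = act p x"
    using pa p r perm_action_comp[OF pa p, of "inv p \<circ> r \<circ> p" x] by (simp add: perm_action_comp)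
qed

lemma supp_perm_subset:
  assumes "perm_action act" and "fperm p" and "finite (supp act x)"
  shows "supp act (act p x) \<subseteq> p ` supp act x"
  using assms by (intro supp_subset supports_perm supports_supp) auto

lemma supp_perm:
  assumes pa: "perm_action act" and p: "fperm p"
  shows "supp act (act p x) = p ` supp act x"
proof -
  have inv_bound: "supp act x \<subseteq> inv p ` supp act (act p x)" if "finite (supp act (act p x))"
    using supp_perm_subset[OF pa _ that, of "inv p"] pa p by simp
  show ?thesis
  proof (cases "finite (supp act x)")
    case True
    then have "finite (supp act (act p x))"
      using supp_perm_subset[OF pa p] finite_subset by blast
    then have "p ` supp act x \<subseteq> supp act (act p x)"
      using inv_bound p by (auto simp: fperm_def bij_is_surj surj_f_inv_f)
    then show ?thesis using supp_perm_subset[OF pa p True] by blast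
  next
    case False
    then have "infinite (supp act (act p x))" using inv_bound finite_subset by blast
    then show ?thesis using False p by (simp add: infinite_supp_UNIV fperm_def bij_is_surj)
  qed
qed

lemma supports_eqvt: "eqvt act act' f \<Longrightarrow> supports act A x \<Longrightarrow> supports act' A (f x)"
  unfolding supports_def eqvt_def by metis

lemma supp_eqvt_subset:
  assumes "perm_action act" and "eqvt act act' f" and "finite (supp act x)"
  shows "supp act' (f x) \<subseteq> supp act x"
  using assms by (intro supp_subset supports_eqvt[of act act' f] supports_supp)

lemma supp_subset_inj_eqvt:
  assumes "inj f" and "eqvt act act' f"
  shows "supp act x \<subseteq> supp act' (f x)"
proof -
  have "supports act A x" if "supports act' A (f x)" for A
    using that assms unfolding supports_def eqvt_def by (metis injD)
  then show ?thesis unfolding supp_def by blast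
qed


lemma supports_image_eqvt:
  assumes pa: "perm_action act" and S: "\<And>t. t \<in> S \<Longrightarrow> supp act t \<subseteq> A"
    and f: "\<And>p t. fperm p \<Longrightarrow> t \<in> S \<Longrightarrow> act' p (f t) = f (act p t)"
  shows "supports (Tact act') A (f ` S)"
  unfolding supports_def
proof (intro allI impI)
  fix p assume p: "fperm p \<and> (\<forall>a\<in>A. p a = a)"
  have fixed: "act' p (f t) = f t" if "t \<in> S" for t
  proof -
    have "act p t = t" by (rule perm_fixing_supp[OF pa]) (use p S[OF that] in auto)
    then show ?thesis using f[OF _ that] p by simp
  qed
  have "Tact act' p (f ` S) = (\<lambda>t. act' p (f t)) ` S" by (simp add: Tact_def image_image)
  also have "\<dots> = f ` S" using fixed by (rule image_cong[OF refl])
  finally show "Tact act' p (f ` S) = f ` S" .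
qed

lemma supp_Tact_subset:
  assumes "perm_action act" and "finite (\<Union>x\<in>S. supp act x)"
  shows "supp (Tact act) S \<subseteq> (\<Union>x\<in>S. supp act x)"
proof -
  have "supports (Tact act) (\<Union>x\<in>S. supp act x) ((\<lambda>x. x) ` S)"
    by (rule supports_image_eqvt[OF assms(1)]) auto
  then show ?thesis using assms(2) by (simp add: supp_subset)
qed

lemma finite_supp_Tact:
  "perm_action act \<Longrightarrow> finite (\<Union>x\<in>S. supp act x) \<Longrightarrow> finite (supp (Tact act) S)"
  using supp_Tact_subset finite_subset by blast

lemma supp_subset_supp_Tact:
  assumes pa: "perm_action act" and ufs: "finite (\<Union>x\<in>S. supp act x)" and x: "x \<in> S"
  shows "supp act x \<subseteq> supp (Tact act) S"
proof
  fix a assume a: "a \<in> supp act x"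
  show "a \<in> supp (Tact act) S"
  proof (rule ccontr)
    assume a_fresh: "a \<notin> supp (Tact act) S"
    obtain b where b: "b \<notin> (\<Union>x\<in>S. supp act x) \<union> supp (Tact act) S"
      using exists_fresh_name[of "(\<Union>x\<in>S. supp act x) \<union> supp (Tact act) S"]
        finite_supp_Tact[OF pa ufs] ufs by blast
    \<comment> \<open>swapping a with a name fresh for all of S fixes S but moves the support of x\<close>
    have "Tact act (swp a b) S = S" using swp_fresh[OF perm_action_Tact[OF pa] a_fresh] b by blast
    then have "act (swp a b) x \<in> S" using x unfolding Tact_def by blast
    moreover have "b \<in> supp act (act (swp a b) x)"
      using a supp_perm[OF pa fperm_swp[of a b], of x] by (force simp: swp_def)
    ultimately show False using b by blast
  qed
qed

lemma finite_UN_supp_Tact: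
  assumes "perm_action act" and "finite (\<Union>x\<in>S. supp act x)" and "fperm p"
  shows "finite (\<Union>x\<in>Tact act p S. supp act x)"
proof -
  have "(\<Union>x\<in>Tact act p S. supp act x) = p ` (\<Union>x\<in>S. supp act x)"
    unfolding Tact_def using supp_perm[OF assms(1,3)] by auto
  then show ?thesis using assms(2) by simp
qed

section \<open>Name abstraction\<close>

lemma absact_abs_subset:
  assumes pa: "perm_action act" and p: "fperm p"
  shows "absact act p (abs act a x) \<subseteq> abs act (p a) (act p x)"
proof
  have inj: "inj p" using p by (rule fperm_inj)
  fix z assume "z \<in> absact act p (abs act a x)"
  then obtain b y c where z: "z = (p b, act p y)"
    and c: "c \<noteq> a" "c \<noteq> b" "c \<notin> supp act x" "c \<notin> supp act y"
    and xy: "act (swp a c) x = act (swp b c) y"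
    unfolding absact_def abs_def by auto
  have "act (swp (p a) (p c)) (act p x) = act p (act (swp a c) x)"
    using pa p by (simp add: perm_action_comp[symmetric] comp_swp[OF inj])
  also have "\<dots> = act (swp (p b) (p c)) (act p y)"
    using pa p xy by (simp add: perm_action_comp[symmetric] comp_swp[OF inj])
  finally have "act (swp (p a) (p c)) (act p x) = act (swp (p b) (p c)) (act p y)" .
  moreover have "p c \<noteq> p a" "p c \<noteq> p b" using c inj by (auto simp: inj_eq)
  moreover have "p c \<notin> supp act (act p x)" "p c \<notin> supp act (act p y)"
    using c inj supp_perm[OF pa p] by (auto simp: inj_eq)
  ultimately show "z \<in> abs act (p a) (act p x)" unfolding abs_def z by blast
qed

lemma absact_abs:
  assumes pa: "perm_action act" and p: "fperm p"
  shows "absact act p (abs act a x) = abs act (p a) (act p x)"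
proof
  show "absact act p (abs act a x) \<subseteq> abs act (p a) (act p x)" by (rule absact_abs_subset[OF pa p])
  have "absact act (inv p) (abs act (p a) (act p x)) \<subseteq> abs act a x"
    using absact_abs_subset[OF pa fperm_inv[OF p], of "p a" "act p x"] pa p
    by (simp add: fperm_inj)
  then have "absact act p (absact act (inv p) (abs act (p a) (act p x))) \<subseteq> absact act p (abs act a x)"
    unfolding absact_def by blast
  then show "abs act (p a) (act p x) \<subseteq> absact act p (abs act a x)"
    using perm_action_absact[OF pa] p by simp
qed

lemma abs_infinite_supp: "infinite (supp act x) \<Longrightarrow> abs act a x = {}"
  unfolding abs_def using infinite_supp_UNIV by fastforce

lemma abs_altdef:
  assumes pa: "perm_action act" and fin: "finite (supp act x)"
  shows "abs act a x = {(b, y). y = act (swp a b) x \<and> (b = a \<or> b \<notin> supp act x)}"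
proof (intro set_eqI iffI)
  fix z assume "z \<in> abs act a x"
  then obtain b y c where z: "z = (b, y)"
    and c: "c \<noteq> a" "c \<noteq> b" "c \<notin> supp act x" "c \<notin> supp act y"
    and xy: "act (swp a c) x = act (swp b c) y"
    unfolding abs_def by auto
  have y: "y = act (swp b c \<circ> swp a c) x" using xy pa by (simp add: perm_action_comp)
  have b_fresh: "b \<notin> supp act x" if "b \<noteq> a"
  proof
    assume "b \<in> supp act x"
    then have "(swp b c \<circ> swp a c) b \<in> supp act y" using y supp_perm[OF pa] by simp
    then show False using c that by (simp add: swp_def)
  qed
  have "act (swp b c \<circ> swp a c) x = act (swp a b) x" if "b \<noteq> a"
    by (rule perm_action_cong[OF pa]) (use b_fresh[OF that] c in \<open>auto simp: swp_def\<close>)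
  then show "z \<in> {(b, y). y = act (swp a b) x \<and> (b = a \<or> b \<notin> supp act x)}"
    using y z b_fresh pa by (cases "b = a") auto
next
  fix z assume "z \<in> {(b, y). y = act (swp a b) x \<and> (b = a \<or> b \<notin> supp act x)}"
  then obtain b y where z: "z = (b, y)" and y: "y = act (swp a b) x"
    and b: "b = a \<or> b \<notin> supp act x"
    by auto
  obtain c where c: "c \<notin> supp act x \<union> {a, b}"
    using exists_fresh_name[of "supp act x \<union> {a, b}"] fin by blast
  have cy: "c \<notin> supp act y" using c supp_perm[OF pa, of "swp a b" x] y by (auto simp: swp_def)
  have "act (swp b c) y = act (swp b c \<circ> swp a b) x" using y pa by (simp add: perm_action_comp)
  also have "\<dots> = act (swp a c) x"
    by (rule perm_action_cong[OF pa]) (use b c in \<open>auto simp: swp_def\<close>)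
  finally show "z \<in> abs act a x" unfolding abs_def z using c cy by auto
qed

lemma mem_abs_self: "perm_action act \<Longrightarrow> finite (supp act x) \<Longrightarrow> (a, x) \<in> abs act a x"
  by (simp add: abs_altdef)

lemma abs_eq_iff:
  assumes pa: "perm_action act" and fin: "finite (supp act x)"
  shows "abs act a x = abs act b y \<longleftrightarrow> y = act (swp a b) x \<and> (b = a \<or> b \<notin> supp act x)"
proof
  assume xy: "abs act a x = abs act b y"
  have "finite (supp act y)"
    using abs_infinite_supp[of act y b] xy mem_abs_self[OF pa fin, of a] by auto
  then have "(b, y) \<in> abs act a x" using xy mem_abs_self[OF pa] by simp
  then show "y = act (swp a b) x \<and> (b = a \<or> b \<notin> supp act x)" using abs_altdef[OF pa fin] by simp
next
  assume y: "y = act (swp a b) x \<and> (b = a \<or> b \<notin> supp act x)"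
  show "abs act a x = abs act b y"
  proof (cases "b = a")
    case True then show ?thesis using y pa by simp
  next
    case False
    then have y: "y = act (swp a b) x" and b: "b \<notin> supp act x" using y by auto
    have supp_y: "supp act y = swp a b ` supp act x" using y supp_perm[OF pa] by simp
    have fin_y: "finite (supp act y)" using supp_y fin by simp
    have same_names: "(d = a \<or> d \<notin> supp act x) \<longleftrightarrow> (d = b \<or> d \<notin> supp act y)" for d
    proof -
      have "d \<in> supp act y \<longleftrightarrow> swp a b d \<in> supp act x"
        unfolding supp_y by (metis image_iff swp_swp)
      then show ?thesis using b False by (auto simp: swp_def)
    qed
    have same_values: "act (swp a d) x = act (swp b d) y" if "d = a \<or> d \<notin> supp act x" for d
    proof -
      have "act (swp b d) y = act (swp b d \<circ> swp a b) x" using y pa by (simp add: perm_action_comp)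
      also have "\<dots> = act (swp a d) x"
        by (rule perm_action_cong[OF pa]) (use that b False in \<open>auto simp: swp_def\<close>)
      finally show ?thesis by simp
    qed
    show ?thesis unfolding abs_altdef[OF pa fin] abs_altdef[OF pa fin_y]
      using same_names same_values by auto
  qed
qed

lemma abs_inject: "perm_action act \<Longrightarrow> finite (supp act x) \<Longrightarrow> abs act a x = abs act a y \<longleftrightarrow> x = y"
  by (auto simp: abs_eq_iff)

lemma supports_abs:
  assumes pa: "perm_action act" and fin: "finite (supp act x)"
  shows "supports (absact act) (supp act x - {b}) (abs act b x)"
  unfolding supports_def
proof (intro allI impI)
  fix p assume p: "fperm p \<and> (\<forall>a\<in>supp act x - {b}. p a = a)"
  have pb: "p b = b \<or> p b \<notin> supp act x"
  proof (rule ccontr)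
    assume "\<not> (p b = b \<or> p b \<notin> supp act x)"
    then have "p b \<noteq> b" "p (p b) = p b" using p by auto
    then show False using fperm_inj[of p] p by (simp add: inj_eq)
  qed
  have "act p x = act (swp b (p b)) x"
    by (rule perm_action_cong[OF pa]) (use p pb in \<open>auto simp: swp_def\<close>)
  then have "abs act b x = abs act (p b) (act p x)"
    using abs_eq_iff[OF pa fin, of b "p b" "act p x"] pb by auto
  then show "absact act p (abs act b x) = abs act b x"
    using absact_abs[OF pa, of p b x] p by simp
qed

lemma finite_supp_abs:
  "perm_action act \<Longrightarrow> finite (supp act x) \<Longrightarrow> finite (supp (absact act) (abs act b x))"
  using finite_supp[OF _ supports_abs] by simp

lemma supp_abs_superset:
  assumes pa: "perm_action act" and fin: "finite (supp act x)"
  shows "supp act x - {b} \<subseteq> supp (absact act) (abs act b x)"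
proof
  fix c assume c: "c \<in> supp act x - {b}"
  show "c \<in> supp (absact act) (abs act b x)"
  proof (rule ccontr)
    assume c_fresh: "c \<notin> supp (absact act) (abs act b x)"
    obtain d where d: "d \<notin> supp (absact act) (abs act b x) \<union> supp act x \<union> {b, c}"
      using exists_fresh_name[of "supp (absact act) (abs act b x) \<union> supp act x \<union> {b, c}"]
        finite_supp_abs[OF pa fin, of b] fin by blast
    have "absact act (swp c d) (abs act b x) = abs act b x"
      using swp_fresh[OF perm_action_absact[OF pa] c_fresh, of d] d by blast
    then have "abs act b (act (swp c d) x) = abs act b x"
      using absact_abs[OF pa fperm_swp, of c d b x] c d by (simp add: swp_def)
    then have "act (swp c d) x = x" using abs_inject[OF pa fin] by metis
    then have "swp c d ` supp act x = supp act x" using supp_perm[OF pa fperm_swp, of c d x] by simp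
    then have "swp c d c \<in> supp act x" using c by blast
    then show False using d by (simp add: swp_def)
  qed
qed

lemma abs_rename_fresh:
  assumes "perm_action act" and "finite (supp act x)" and "a \<notin> supp (absact act) (abs act b x)"
  shows "abs act b x = abs act a (act (swp b a) x)"
  using abs_eq_iff[OF assms(1,2)] supp_abs_superset[OF assms(1,2), of b] assms(3) by blast

lemma some_mem_abs:
  assumes "perm_action act" and "finite (supp act x)"
  obtains c where "(SOME z. z \<in> abs act a x) = (c, act (swp a c) x)" and "c = a \<or> c \<notin> supp act x"
proof -
  have "(SOME z. z \<in> abs act a x) \<in> abs act a x" using mem_abs_self[OF assms] by (rule someI)
  then show ?thesis using that unfolding abs_altdef[OF assms] by auto
qed

lemma absmap_abs:
  assumes pa: "perm_action act" and pa': "perm_action act'" and f: "eqvt act act' f"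
    and fin: "finite (supp act x)"
  shows "absmap act' f (abs act a x) = abs act' a (f x)"
proof -
  obtain c where some: "(SOME z. z \<in> abs act a x) = (c, act (swp a c) x)"
    and c: "c = a \<or> c \<notin> supp act x"
    using some_mem_abs[OF pa fin] by blast
  have supp_f: "supp act' (f x) \<subseteq> supp act x" by (rule supp_eqvt_subset[OF pa f fin])
  then have "finite (supp act' (f x))" using fin finite_subset by blast
  moreover have "f (act (swp a c) x) = act' (swp a c) (f x)" using f by (simp add: eqvt_def)
  ultimately have "abs act' a (f x) = abs act' c (f (act (swp a c) x))"
    using abs_eq_iff[OF pa', of "f x" a c] c supp_f by auto
  then show ?thesis unfolding absmap_def Let_def some by simp
qed


section \<open>Preimages under abstraction\<close>

(* For a fresh name a, the abstraction component of eps act S is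
   <a>(abs_preimage act FAbs a S), the S_|a of the paper; for rho it is taken with h = id. *)
definition abs_preimage ::
    "((name \<Rightarrow> name) \<Rightarrow> 'x \<Rightarrow> 'x) \<Rightarrow> ((name \<times> 'x) set \<Rightarrow> 'y) \<Rightarrow> name \<Rightarrow> 'y set \<Rightarrow> 'x set"
  where "abs_preimage act h a Z = {s. h (abs act a s) \<in> Z}"

lemma eqvt_id: "eqvt act act id"
  by (simp add: eqvt_def)

lemma Tact_abs_preimage:
  assumes pa: "perm_action act" and pa2: "perm_action act2" and h: "eqvt (absact act) act2 h"
    and p: "fperm p"
  shows "Tact act p (abs_preimage act h a Z) = abs_preimage act h (p a) (Tact act2 p Z)"
proof -
  have h_abs: "h (abs act (p a) (act p s)) = act2 p (h (abs act a s))" for s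
    using h p unfolding eqvt_def by (metis absact_abs[OF pa p])
  show ?thesis
  proof (intro set_eqI iffI)
    fix s assume "s \<in> Tact act p (abs_preimage act h a Z)"
    then obtain s' where "s = act p s'" and "h (abs act a s') \<in> Z"
      unfolding Tact_def abs_preimage_def by auto
    then show "s \<in> abs_preimage act h (p a) (Tact act2 p Z)"
      using h_abs unfolding Tact_def abs_preimage_def by auto
  next
    fix s assume "s \<in> abs_preimage act h (p a) (Tact act2 p Z)"
    then obtain w where w: "w \<in> Z" and hw: "h (abs act (p a) s) = act2 p w"
      unfolding Tact_def abs_preimage_def by auto
    define s' where "s' = act (inv p) s"
    have s: "s = act p s'" unfolding s'_def using pa p by simp
    then have "act2 p (h (abs act a s')) = act2 p w" using h_abs hw by simp
    then have "h (abs act a s') = w" using perm_action_inject[OF pa2 p] by blast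
    then show "s \<in> Tact act p (abs_preimage act h a Z)"
      using w s unfolding Tact_def abs_preimage_def by auto
  qed
qed

lemma supp_abs_preimage_subset:
  assumes pa: "perm_action act" and pa2: "perm_action act2" and h: "eqvt (absact act) act2 h"
    and fin: "finite (supp (Tact act2) Z)"
  shows "supp (Tact act) (abs_preimage act h a Z) \<subseteq> supp (Tact act2) Z \<union> {a}"
proof (rule supp_subset)
  show "supports (Tact act) (supp (Tact act2) Z \<union> {a}) (abs_preimage act h a Z)"
    unfolding supports_def
  proof (intro allI impI)
    fix p assume p: "fperm p \<and> (\<forall>b\<in>supp (Tact act2) Z \<union> {a}. p b = b)"
    then have "Tact act2 p Z = Z" using perm_fixing_supp[OF perm_action_Tact[OF pa2], of p Z] by blast
    then show "Tact act p (abs_preimage act h a Z) = abs_preimage act h a Z"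
      using Tact_abs_preimage[OF pa pa2 h, of p a Z] p by simp
  qed
qed (use fin in simp)

lemma finite_supp_abs_preimage:
  assumes "perm_action act" and "perm_action act2" and "eqvt (absact act) act2 h"
    and "finite (supp (Tact act2) Z)"
  shows "finite (supp (Tact act) (abs_preimage act h a Z))"
  using supp_abs_preimage_subset[OF assms, of a] assms(4) finite_subset by blast

lemma abs_abs_preimage_fresh:
  assumes pa: "perm_action act" and pa2: "perm_action act2" and h: "eqvt (absact act) act2 h"
    and fin: "finite (supp (Tact act2) Z)"
    and a: "a \<notin> supp (Tact act2) Z" and b: "b \<notin> supp (Tact act2) Z"
  shows "abs (Tact act) a (abs_preimage act h a Z) = abs (Tact act) b (abs_preimage act h b Z)"
proof -
  have "Tact act2 (swp a b) Z = Z" using swp_fresh[OF perm_action_Tact[OF pa2] a b] .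
  then have "abs_preimage act h b Z = Tact act (swp a b) (abs_preimage act h a Z)"
    using Tact_abs_preimage[OF pa pa2 h fperm_swp, of a b a Z] by (simp add: swp_def)
  moreover have "b = a \<or> b \<notin> supp (Tact act) (abs_preimage act h a Z)"
    using supp_abs_preimage_subset[OF pa pa2 h fin, of a] b by blast
  ultimately show ?thesis
    using abs_eq_iff[OF perm_action_Tact[OF pa] finite_supp_abs_preimage[OF pa pa2 h fin]] by blast
qed

lemma abs_abs_preimage_some_fresh:
  assumes pa: "perm_action act" and pa2: "perm_action act2" and h: "eqvt (absact act) act2 h"
    and fin: "finite (supp (Tact act2) Z)" and b: "b \<notin> supp (Tact act2) Z"
  defines "a \<equiv> SOME a. a \<notin> supp (Tact act2) Z"
  shows "abs (Tact act) a (abs_preimage act h a Z) = abs (Tact act) b (abs_preimage act h b Z)"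
proof (rule abs_abs_preimage_fresh[OF pa pa2 h fin _ b])
  show "a \<notin> supp (Tact act2) Z" unfolding a_def using exists_fresh_name[OF fin] by (rule someI_ex)
qed

section \<open>The transformations \<lambda>, \<rho> and \<epsilon>\<close>

lemma fst_eps [simp]: "fst (eps act S) \<longleftrightarrow> FStar \<in> S"
  by (simp add: eps_def Let_def)

lemma fst_snd_eps [simp]: "fst (snd (eps act S)) = (\<lambda>a. {s. FPair a s \<in> S})"
  by (simp add: eps_def Let_def)

lemma eps_fresh:
  assumes pa: "perm_action act" and "finite (supp (Tact (Fact act)) S)"
    and "a \<notin> supp (Tact (Fact act)) S"
  shows "eps act S = (FStar \<in> S, \<lambda>b. {s. FPair b s \<in> S}, abs (Tact act) a (abs_preimage act FAbs a S))"
  using abs_abs_preimage_some_fresh[OF pa perm_action_Fact[OF pa] eqvt_FAbs assms(2,3)]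
  by (simp add: eps_def Let_def abs_preimage_def)

lemma rho_fresh:
  assumes pa: "perm_action act"
    and "finite (supp (Tact (absact act)) ((\<lambda>g. snd (snd g)) ` S))"
    and "a \<notin> supp (Tact (absact act)) ((\<lambda>g. snd (snd g)) ` S)"
  shows "rho act S = (True \<in> fst ` S, \<lambda>b. {f b | f. f \<in> (\<lambda>g. fst (snd g)) ` S},
           abs (Tact act) a (abs_preimage act id a ((\<lambda>g. snd (snd g)) ` S)))"
  using abs_abs_preimage_some_fresh[OF pa perm_action_absact[OF pa] eqvt_id assms(2,3)]
  by (simp add: rho_def Let_def abs_preimage_def)

lemma absact_snd_snd_eps:
  assumes pa: "perm_action act" and p: "fperm p" and fin: "finite (supp (Tact (Fact act)) S)"
  shows "absact (Tact act) p (snd (snd (eps act S))) = snd (snd (eps act (Tact (Fact act) p S)))"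
proof -
  obtain a where a: "a \<notin> supp (Tact (Fact act)) S" using exists_fresh_name[OF fin] by blast
  have supp_pS: "supp (Tact (Fact act)) (Tact (Fact act) p S) = p ` supp (Tact (Fact act)) S"
    using supp_perm[OF perm_action_Tact[OF perm_action_Fact[OF pa]] p] .
  then have "p a \<notin> supp (Tact (Fact act)) (Tact (Fact act) p S)"
    using a inj_image_mem_iff[OF fperm_inj[OF p]] by simp
  moreover have "finite (supp (Tact (Fact act)) (Tact (Fact act) p S))" using supp_pS fin by simp
  ultimately show ?thesis
    using eps_fresh[OF pa fin a] eps_fresh[OF pa] absact_abs[OF perm_action_Tact[OF pa] p]
      Tact_abs_preimage[OF pa perm_action_Fact[OF pa] eqvt_FAbs p] by simp
qed

lemma lam_FAbs:
  assumes pa: "perm_action act" and ufs: "finite (\<Union>x\<in>T. supp act x)"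
  shows "lam act (FAbs (abs (Tact act) b T)) = {FAbs (abs act b s) | s. s \<in> T}"
proof -
  obtain c where some: "(SOME z. z \<in> abs (Tact act) b T) = (c, Tact act (swp b c) T)"
    and c: "c = b \<or> c \<notin> supp (Tact act) T"
    using some_mem_abs[OF perm_action_Tact[OF pa] finite_supp_Tact[OF pa ufs]] by blast
  have rename: "abs act c (act (swp b c) s) = abs act b s" if s: "s \<in> T" for s
  proof -
    have "finite (supp act s)" using ufs s by (meson UN_upper finite_subset)
    moreover have "c = b \<or> c \<notin> supp act s" using c supp_subset_supp_Tact[OF pa ufs s] by blast
    ultimately show ?thesis using abs_eq_iff[OF pa, of s b c "act (swp b c) s"] by simp
  qed
  have "lam act (FAbs (abs (Tact act) b T)) = {FAbs (abs act c s) | s. s \<in> Tact act (swp b c) T}"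
    by (simp add: lam_def Let_def some)
  also have "\<dots> = {FAbs (abs act b s) | s. s \<in> T}" using rename by (auto simp: Tact_def)
  finally show ?thesis .
qed

lemma Fc_cases:
  assumes "t \<in> Fc (Tc X act) (Tact act)"
  obtains (FStar) "t = FStar"
    | (FPair) a T where "t = FPair a T"
    | (FAbs) b T where "t = FAbs (abs (Tact act) b T)" and "finite (\<Union>x\<in>T. supp act x)"
  using assms unfolding Fc_def Tc_def by blast

lemma lam_eqvt:
  assumes pa: "perm_action act" and t: "t \<in> Fc (Tc X act) (Tact act)" and p: "fperm p"
  shows "Tact (Fact act) p (lam act t) = lam act (Fact (Tact act) p t)"
  using t
proof (cases rule: Fc_cases)
  case (FAbs b T)
  have "Fact (Tact act) p t = FAbs (abs (Tact act) (p b) (Tact act p T))"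
    using FAbs(1) absact_abs[OF perm_action_Tact[OF pa] p] by (simp add: Fact_def)
  then have "lam act (Fact (Tact act) p t) = {FAbs (abs act (p b) s) | s. s \<in> Tact act p T}"
    using lam_FAbs[OF pa finite_UN_supp_Tact[OF pa FAbs(2) p]] by simp
  moreover have "Tact (Fact act) p (lam act t) = {FAbs (abs act (p b) s) | s. s \<in> Tact act p T}"
    unfolding FAbs(1) lam_FAbs[OF pa FAbs(2)] Tact_def using absact_abs[OF pa p]
    by (simp add: Fact_def Setcompr_eq_image image_comp o_def)
  ultimately show ?thesis by simp
qed (auto simp: lam_def Fact_def Tact_def Setcompr_eq_image image_comp o_def)

lemma FStar_mem_lam: "FStar \<in> lam act t \<longleftrightarrow> t = FStar"
  by (cases t) (auto simp: lam_def Let_def)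

lemma FPair_mem_lam: "FPair a s \<in> lam act t \<longleftrightarrow> (\<exists>T. t = FPair a T \<and> s \<in> T)"
  by (cases t) (auto simp: lam_def Let_def)

(* lam picks an arbitrary representative of the abstraction; freshness of a allows renaming
   it to a. *)
lemma FAbs_mem_lam:
  assumes pa: "perm_action act" and t: "t \<in> Fc (Tc X act) (Tact act)"
    and a: "a \<notin> supp (Fact (Tact act)) t"
  shows "FAbs (abs act a s) \<in> lam act t \<longleftrightarrow> (\<exists>T. t = FAbs (abs (Tact act) a T) \<and> s \<in> T)"
  using t
proof (cases rule: Fc_cases)
  case (FAbs b T0)
  have "supp (absact (Tact act)) (abs (Tact act) b T0) \<subseteq> supp (Fact (Tact act)) t"
    unfolding FAbs(1) by (rule supp_subset_inj_eqvt[OF _ eqvt_FAbs]) (simp add: inj_def)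
  then have t_a: "t = FAbs (abs (Tact act) a (Tact act (swp b a) T0))"
    using abs_rename_fresh[OF perm_action_Tact[OF pa] finite_supp_Tact[OF pa FAbs(2)]] a FAbs(1)
    by blast
  define T where "T = Tact act (swp b a) T0"
  have ufs: "finite (\<Union>x\<in>T. supp act x)"
    unfolding T_def by (rule finite_UN_supp_Tact[OF pa FAbs(2) fperm_swp])
  have lam: "lam act t = {FAbs (abs act a x) | x. x \<in> T}"
    unfolding t_a T_def[symmetric] by (rule lam_FAbs[OF pa ufs])
  have "FAbs (abs act a s) \<in> lam act t \<longleftrightarrow> s \<in> T"
  proof
    assume "FAbs (abs act a s) \<in> lam act t"
    then obtain x where x: "x \<in> T" and "abs act a s = abs act a x" unfolding lam by auto
    moreover have "finite (supp act x)" using ufs x by (meson UN_upper finite_subset)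
    ultimately show "s \<in> T" using abs_inject[OF pa, of x a s] by metis
  qed (auto simp: lam)
  moreover have "(\<exists>T'. t = FAbs (abs (Tact act) a T') \<and> s \<in> T') \<longleftrightarrow> s \<in> T"
    using t_a abs_inject[OF perm_action_Tact[OF pa] finite_supp_Tact[OF pa ufs], of a]
    unfolding T_def[symmetric] by auto
  ultimately show ?thesis by simp
qed (auto simp: lam_def)


lemma supp_Union_lam_subset:
  assumes pa: "perm_action act" and S: "S \<subseteq> Fc (Tc X act) (Tact act)" and fin: "finite N"
    and N: "\<And>t. t \<in> S \<Longrightarrow> supp (Fact (Tact act)) t \<subseteq> N"
  shows "supp (Tact (Fact act)) (\<Union> (lam act ` S)) \<subseteq> N"
proof -
  have "supports (Tact (Tact (Fact act))) N (lam act ` S)"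
  proof (rule supports_image_eqvt[where act = "Fact (Tact act)"])
    show "perm_action (Fact (Tact act))" using pa by simp
    show "Tact (Fact act) p (lam act t) = lam act (Fact (Tact act) p t)" if "fperm p" "t \<in> S" for p t
      using lam_eqvt[OF pa _ that(1)] S that(2) by blast
  qed (rule N)
  then have "supports (Tact (Fact act)) N (\<Union> (lam act ` S))"
    by (rule supports_eqvt[OF eqvt_Union])
  then show ?thesis using fin by (simp add: supp_subset)
qed

lemma abs_preimage_Union_lam:
  assumes pa: "perm_action act" and S: "S \<subseteq> Fc (Tc X act) (Tact act)"
    and a: "\<And>t. t \<in> S \<Longrightarrow> a \<notin> supp (Fact (Tact act)) t"
  shows "abs_preimage act FAbs a (\<Union> (lam act ` S)) = \<Union> (abs_preimage (Tact act) FAbs a S)"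
proof -
  have "FAbs (abs act a s) \<in> lam act t \<longleftrightarrow> (\<exists>T. t = FAbs (abs (Tact act) a T) \<and> s \<in> T)"
    if "t \<in> S" for t s
    using FAbs_mem_lam[OF pa _ a] S that by blast
  then show ?thesis unfolding abs_preimage_def by blast
qed

lemma Gmap_Union_eps:
  assumes pa: "perm_action act" and fin: "finite (supp (Tact (Fact (Tact act))) S)"
    and a: "a \<notin> supp (Tact (Fact (Tact act))) S"
  shows "Gmap \<Union> (Tact act) (eps (Tact act) S)
    = (FStar \<in> S, \<lambda>b. \<Union> {T. FPair b T \<in> S}, abs (Tact act) a (\<Union> (abs_preimage (Tact act) FAbs a S)))"
proof -
  have "absmap (Tact act) \<Union> (abs (Tact (Tact act)) a (abs_preimage (Tact act) FAbs a S))
      = abs (Tact act) a (\<Union> (abs_preimage (Tact act) FAbs a S))"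
    using pa fin by (intro absmap_abs eqvt_Union finite_supp_abs_preimage[OF _ _ eqvt_FAbs]) simp_all
  then show ?thesis
    using eps_fresh[OF perm_action_Tact[OF pa] fin a] by (simp add: Gmap_def o_def)
qed

lemma supp_abs_components_eps_subset:
  assumes pa: "perm_action act" and fin: "finite N"
    and N: "\<And>s. s \<in> S \<Longrightarrow> supp (Tact (Fact act)) s \<subseteq> N"
  shows "supp (Tact (absact (Tact act))) ((\<lambda>g. snd (snd g)) ` eps act ` S) \<subseteq> N"
proof -
  have "supports (Tact (absact (Tact act))) N ((\<lambda>s. snd (snd (eps act s))) ` S)"
  proof (rule supports_image_eqvt[where act = "Tact (Fact act)"])
    show "perm_action (Tact (Fact act))" using pa by simp
    show "absact (Tact act) p (snd (snd (eps act s))) = snd (snd (eps act (Tact (Fact act) p s)))"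
      if "fperm p" "s \<in> S" for p s
      using absact_snd_snd_eps[OF pa that(1) finite_subset[OF N[OF that(2)] fin]] .
  qed (rule N)
  then show ?thesis using fin by (simp add: image_image supp_subset)
qed

lemma Gmap_Union_rho_eps:
  assumes pa: "perm_action act" and fin: "finite N"
    and N: "\<And>s. s \<in> S \<Longrightarrow> supp (Tact (Fact act)) s \<subseteq> N" and a: "a \<notin> N"
  shows "Gmap \<Union> (Tact act) (rho (Tact act) (eps act ` S))
    = (\<exists>s\<in>S. FStar \<in> s, \<lambda>b. \<Union>s\<in>S. {x. FPair b x \<in> s}, abs (Tact act) a (abs_preimage act FAbs a (\<Union> S)))"
proof -
  have fin_s: "finite (supp (Tact (Fact act)) s)" if "s \<in> S" for s
    using N[OF that] fin by (rule finite_subset)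
  define P where "P = (\<lambda>g. snd (snd g)) ` eps act ` S"
  have supp_P: "supp (Tact (absact (Tact act))) P \<subseteq> N"
    unfolding P_def by (rule supp_abs_components_eps_subset[OF pa fin N])
  have fin_P: "finite (supp (Tact (absact (Tact act))) P)" using supp_P fin by (rule finite_subset)
  have "eps act s = (FStar \<in> s, \<lambda>b. {x. FPair b x \<in> s}, abs (Tact act) a (abs_preimage act FAbs a s))"
    if "s \<in> S" for s
    using eps_fresh[OF pa fin_s[OF that]] a N[OF that] by blast
  then have P_a: "P = (\<lambda>s. abs (Tact act) a (abs_preimage act FAbs a s)) ` S"
    unfolding P_def image_image by simp
  have "abs (Tact act) a Y = abs (Tact act) a (abs_preimage act FAbs a s) \<longleftrightarrow> Y = abs_preimage act FAbs a s"
    if "s \<in> S" for s Y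
    using abs_inject[OF perm_action_Tact[OF pa]
        finite_supp_abs_preimage[OF pa perm_action_Fact[OF pa] eqvt_FAbs fin_s[OF that]]]
    by metis
  then have "abs_preimage (Tact act) id a P = abs_preimage act FAbs a ` S"
    unfolding abs_preimage_def[of "Tact act" id] P_a by auto
  then have Union_eq: "\<Union> (abs_preimage (Tact act) id a P) = abs_preimage act FAbs a (\<Union> S)"
    unfolding abs_preimage_def by blast
  have absmap_eq: "absmap (Tact act) \<Union> (abs (Tact (Tact act)) a (abs_preimage (Tact act) id a P))
      = abs (Tact act) a (\<Union> (abs_preimage (Tact act) id a P))"
    using pa fin_P by (intro absmap_abs eqvt_Union finite_supp_abs_preimage[OF _ _ eqvt_id]) simp_all
  have "a \<notin> supp (Tact (absact (Tact act))) P" using supp_P a by blast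
  then have rho_eq: "rho (Tact act) (eps act ` S) = (True \<in> fst ` eps act ` S,
      \<lambda>b. {f b | f. f \<in> (\<lambda>g. fst (snd g)) ` eps act ` S},
      abs (Tact (Tact act)) a (abs_preimage (Tact act) id a P))"
    using rho_fresh[OF perm_action_Tact[OF pa] fin_P[unfolded P_def]] unfolding P_def by blast
  have FStar_eq: "True \<in> fst ` eps act ` S \<longleftrightarrow> (\<exists>s\<in>S. FStar \<in> s)"
    by (simp add: image_image image_iff)
  have FPair_eq: "\<Union> {f b | f. f \<in> (\<lambda>g. fst (snd g)) ` eps act ` S} = (\<Union>s\<in>S. {x. FPair b x \<in> s})" for b
    by (auto simp: Setcompr_eq_image image_image)
  show ?thesis
    unfolding rho_eq Gmap_def prod.case absmap_eq Union_eq FStar_eq by (simp add: o_def FPair_eq)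
qed

lemma eps_Union_lam:
  assumes pa: "perm_action act" and S: "S \<in> Tc (Fc (Tc X act) (Tact act)) (Fact (Tact act))"
  shows "eps act (\<Union> (lam act ` S)) = Gmap \<Union> (Tact act) (eps (Tact act) S)"
proof -
  define N where "N = (\<Union>t\<in>S. supp (Fact (Tact act)) t)"
  have S_Fc: "S \<subseteq> Fc (Tc X act) (Tact act)" and fin: "finite N"
    using S by (auto simp: Tc_def N_def)
  have supp_t: "supp (Fact (Tact act)) t \<subseteq> N" if "t \<in> S" for t
    using that by (auto simp: N_def)
  have supp_S: "supp (Tact (Fact (Tact act))) S \<subseteq> N"
    unfolding N_def by (rule supp_Tact_subset) (use pa fin in \<open>simp_all add: N_def\<close>)
  have supp_Z: "supp (Tact (Fact act)) (\<Union> (lam act ` S)) \<subseteq> N"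
    by (rule supp_Union_lam_subset[OF pa S_Fc fin supp_t])
  obtain a where a: "a \<notin> N" using exists_fresh_name[OF fin] by blast
  have "eps act (\<Union> (lam act ` S)) = (FStar \<in> \<Union> (lam act ` S),
      \<lambda>b. {s. FPair b s \<in> \<Union> (lam act ` S)}, abs (Tact act) a (abs_preimage act FAbs a (\<Union> (lam act ` S))))"
    using supp_Z a by (intro eps_fresh pa finite_subset[OF supp_Z fin]) blast
  also have "\<dots> = (FStar \<in> S, \<lambda>b. \<Union> {T. FPair b T \<in> S},
      abs (Tact act) a (\<Union> (abs_preimage (Tact act) FAbs a S)))"
  proof -
    have "abs_preimage act FAbs a (\<Union> (lam act ` S)) = \<Union> (abs_preimage (Tact act) FAbs a S)"
      by (rule abs_preimage_Union_lam[OF pa S_Fc]) (use supp_t a in blast)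
    moreover have "{s. FPair b s \<in> \<Union> (lam act ` S)} = \<Union> {T. FPair b T \<in> S}" for b
      by (auto simp: FPair_mem_lam)
    ultimately show ?thesis by (simp add: FStar_mem_lam)
  qed
  also have "\<dots> = Gmap \<Union> (Tact act) (eps (Tact act) S)"
    using supp_S a by (intro Gmap_Union_eps[symmetric] pa finite_subset[OF supp_S fin]) blast
  finally show ?thesis .
qed

lemma eps_Union:
  assumes pa: "perm_action act" and S: "S \<in> Tc (Tc (Fc X act) (Fact act)) (Tact (Fact act))"
  shows "eps act (\<Union> S) = Gmap \<Union> (Tact act) (rho (Tact act) (eps act ` S))"
proof -
  define N where "N = (\<Union>s\<in>S. supp (Tact (Fact act)) s)"
  have fin: "finite N" using S unfolding N_def Tc_def by blast
  have supp_s: "supp (Tact (Fact act)) s \<subseteq> N" if "s \<in> S" for s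
    using that by (auto simp: N_def)
  have supp_S: "supp (Tact (Tact (Fact act))) S \<subseteq> N"
    unfolding N_def by (rule supp_Tact_subset) (use pa fin in \<open>simp_all add: N_def\<close>)
  have "supp (Tact (Fact act)) (\<Union> S) \<subseteq> supp (Tact (Tact (Fact act))) S"
    using pa finite_subset[OF supp_S fin] by (intro supp_eqvt_subset[OF _ eqvt_Union]) simp_all
  then have supp_Z: "supp (Tact (Fact act)) (\<Union> S) \<subseteq> N" using supp_S by blast
  obtain a where a: "a \<notin> N" using exists_fresh_name[OF fin] by blast
  have "eps act (\<Union> S) = (FStar \<in> \<Union> S, \<lambda>b. {s. FPair b s \<in> \<Union> S},
      abs (Tact act) a (abs_preimage act FAbs a (\<Union> S)))"
    using supp_Z a by (intro eps_fresh pa finite_subset[OF supp_Z fin]) blast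
  also have "\<dots> = Gmap \<Union> (Tact act) (rho (Tact act) (eps act ` S))"
    using Gmap_Union_rho_eps[OF pa fin supp_s a] by auto
  finally show ?thesis .
qed

theorem lemma4p20:
  fixes X :: "'x set" and act :: "(name \<Rightarrow> name) \<Rightarrow> 'x \<Rightarrow> 'x"
  assumes "nominal_set X act"
  shows "(\<forall>S \<in> Tc (Fc (Tc X act) (Tact act)) (Fact (Tact act)).
            eps act (\<Union> (lam act ` S)) = Gmap \<Union> (Tact act) (eps (Tact act) S))
       \<and> (\<forall>S \<in> Tc (Tc (Fc X act) (Fact act)) (Tact (Fact act)).
            eps act (\<Union> S) = Gmap \<Union> (Tact act) (rho (Tact act) (eps act ` S)))"
proof -
  have pa: "perm_action act" using assms by (rule nominal_set_perm_action)
  show ?thesis using eps_Union_lam[OF pa] eps_Union[OF pa] by blast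
qed

end
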